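(* Let $X,Y$ be real Hilbert spaces and $T:X\to Y$ an injective bounded linear operator. Let $x^\dagger\in X$, $y^\dagger:=Tx^\dagger$, and $x_0\in X$. For $\alpha>0$ let $x_\alpha:=(T^*T+\alpha I)^{-1}(T^*y^\dagger+\alpha x_0)$, i.e. the unique minimizer over $x\in X$ of $\|y^\dagger-Tx\|^2+\alpha\|x-x_0\|^2$. Let $0\le\nu\le1$. Then $$N_\nu^{-1}\|x^\dagger-x_0\|_{\nu:1}\le\sup_{\alpha>0}\alpha^{-\nu}\|x^\dagger-x_\alpha\|\le\|x^\dagger-x_0\|_{\nu:1}.$$ Equalities hold for $\nu=0$ and $\nu=1$. If $\nu=1$, then $\sup_{\alpha>0}$ can be replaced by $\lim_{\alpha\searrow0}$.
   Context: $X_1:=\mathrm{range}(T^*T)$ with norm $\|x\|_1:=\|(T^*T)^{-1}x\|$. For $x\in X$ and $t>0$, $K_t(x):=\inf_{x_1\in X_1}\big(\|x-x_1\|^2+t^2\|x_1\|_1^2\big)^{1/2}$, and for $0\le\nu\le1$, $\|x\|_{\nu:1}:=\sup_{t>0}t^{-\nu}K_t(x)\in[0,\infty]$. For $0<\nu<1$, $N_\nu:=\big(\nu^\nu(1-\nu)^{1-\nu}\big)^{-1/2}$, and $N_0:=N_1:=1$. *)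

theory Defs
  imports "HOL-Analysis.Analysis"
begin

text \<open>Here A stands for the operator T^*T; X_1 = range A with norm |x|_1 = |A^{-1} x|.\<close>

definition Kfun :: "('a::real_normed_vector \<Rightarrow> 'a) \<Rightarrow> real \<Rightarrow> 'a \<Rightarrow> real" where
  "Kfun A t x = (INF x1\<in>range A. sqrt ((norm (x - x1))\<^sup>2 + t\<^sup>2 * (norm (inv A x1))\<^sup>2))"

definition interp_norm :: "('a::real_normed_vector \<Rightarrow> 'a) \<Rightarrow> real \<Rightarrow> 'a \<Rightarrow> ereal" where
  "interp_norm A \<nu> x = (SUP t\<in>{0<..}. ereal (t powr (-\<nu>) * Kfun A t x))"

definition Nconst :: "real \<Rightarrow> real" where
  "Nconst \<nu> = (if \<nu> = 0 \<or> \<nu> = 1 then 1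
               else 1 / sqrt (\<nu> powr \<nu> * (1 - \<nu>) powr (1 - \<nu>)))"

end

theory Submission
  imports Defs
begin

text \<open>Write \<open>A = T\<^sup>*T\<close>, \<open>e = x\<^sup>\<dagger> - x\<^sub>0\<close> and \<open>d\<^sub>\<alpha> = x\<^sup>\<dagger> - x\<^sub>\<alpha>\<close>, so that \<open>(A + \<alpha>) d\<^sub>\<alpha> = \<alpha> e\<close>. First \<open>\<parallel>d\<^sub>\<alpha>\<parallel> \<le> K\<^sub>\<alpha>(e)\<close>: for every
  \<open>x\<^sub>1 = A z\<close>, Cauchy-Schwarz bounds \<open>\<parallel>d\<^sub>\<alpha>\<parallel>\<close> by \<open>(\<parallel>e - A z\<parallel>\<^sup>2 + \<alpha>\<^sup>2\<parallel>z\<parallel>\<^sup>2)\<^sup>1\<^sup>/\<^sup>2\<close>; this gives the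
  upper bound. Second \<open>K\<^sub>t(e) \<le> \<parallel>d\<^sub>\<alpha>\<parallel> (1 + t\<^sup>2/\<alpha>\<^sup>2)\<^sup>1\<^sup>/\<^sup>2\<close>, witnessed by \<open>x\<^sub>1 = e - d\<^sub>\<alpha>\<close>;
  with \<open>\<alpha> = s t\<close> and the infimum \<open>N\<^sub>\<nu>\<close> of \<open>s\<^sup>\<nu> (1 + s\<^sup>-\<^sup>2)\<^sup>1\<^sup>/\<^sup>2\<close> over \<open>s > 0\<close> this gives the
  lower bound. For \<open>\<nu> = 1\<close>, \<open>\<alpha>\<^sup>-\<^sup>1\<parallel>d\<^sub>\<alpha>\<parallel> = \<parallel>(A + \<alpha>)\<^sup>-\<^sup>1 e\<parallel>\<close> is non-increasing in \<open>\<alpha>\<close>, so its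
  supremum is its limit at \<open>0\<close>. That \<open>x\<^sub>\<alpha>\<close> exists at all follows by minimizing the uniformly
  convex functional \<open>\<parallel>T x\<parallel>\<^sup>2 + \<alpha> \<parallel>x - c\<parallel>\<^sup>2\<close> on the complete space \<open>X\<close>.\<close>

lemma nonneg_if_quadratic_nonneg_at_right:
  fixes a q :: real
  assumes "\<And>s. 0 < s \<Longrightarrow> 0 \<le> s * a + s\<^sup>2 * q"
  shows "0 \<le> a"
proof (rule ccontr)
  assume "\<not> 0 \<le> a"
  define s where "s = - a / (\<bar>q\<bar> + 1)"
  have "0 < s" unfolding s_def using \<open>\<not> 0 \<le> a\<close> by (intro divide_pos_pos) auto
  have "s * a + s\<^sup>2 * q \<le> s * (a + s * \<bar>q\<bar>)"
    using \<open>0 < s\<close> by (simp add: power2_eq_square algebra_simps mult_left_mono abs_ge_self)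
  also have "a + s * \<bar>q\<bar> = a / (\<bar>q\<bar> + 1)"
    unfolding s_def by (simp add: field_simps)
  finally have "s * a + s\<^sup>2 * q \<le> s * (a / (\<bar>q\<bar> + 1))" .
  also have "\<dots> < 0"
    using \<open>0 < s\<close> \<open>\<not> 0 \<le> a\<close> by (intro mult_pos_neg divide_neg_pos) auto
  finally show False using assms[OF \<open>0 < s\<close>] by simp
qed

lemma uniformly_convex_has_minimizer:
  fixes J :: "'a::{real_normed_vector,complete_space} \<Rightarrow> real"
  assumes cont: "continuous_on UNIV J" and nonneg: "\<And>x. 0 \<le> J x" and "0 < \<mu>"
    and convex: "\<And>x y. \<mu> * (norm (x - y))\<^sup>2 \<le> J x + J y - 2 * J ((1/2) *\<^sub>R (x + y))"
  shows "\<exists>x. \<forall>y. J x \<le> J y"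
proof -
  define m where "m = Inf (range J)"
  have bdd: "bdd_below (range J)" using nonneg by (intro bdd_belowI[of _ 0]) auto
  have m_le: "m \<le> J x" for x unfolding m_def by (rule cInf_lower[OF _ bdd]) simp
  have "\<exists>x. J x < m + 1 / real (Suc n)" for n
    using cInf_lessD[of "range J" "m + 1 / real (Suc n)"] by (auto simp: m_def)
  then obtain xs where xs: "\<And>n. J (xs n) < m + 1 / real (Suc n)" by metis
  have "Cauchy xs"
  proof (rule CauchyI)
    fix \<epsilon> :: real assume "0 < \<epsilon>"
    then obtain M where M: "inverse (real (Suc M)) < \<mu> * \<epsilon>\<^sup>2 / 2"
      using \<open>0 < \<mu>\<close> reals_Archimedean by (metis divide_pos_pos zero_less_numeral mult_pos_pos zero_less_power)
    show "\<exists>M. \<forall>m\<ge>M. \<forall>n\<ge>M. norm (xs m - xs n) < \<epsilon>"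
    proof (intro exI allI impI)
      fix i j assume "M \<le> i" "M \<le> j"
      then have "1 / real (Suc i) \<le> 1 / real (Suc M)" "1 / real (Suc j) \<le> 1 / real (Suc M)"
        by (auto simp: frac_le)
      then have "\<mu> * (norm (xs i - xs j))\<^sup>2 < 2 / real (Suc M)"
        using convex[of "xs i" "xs j"] xs[of i] xs[of j] m_le[of "(1/2) *\<^sub>R (xs i + xs j)"] by linarith
      with M have "\<mu> * (norm (xs i - xs j))\<^sup>2 < \<mu> * \<epsilon>\<^sup>2"
        by (simp add: inverse_eq_divide)
      then have "(norm (xs i - xs j))\<^sup>2 < \<epsilon>\<^sup>2" using \<open>0 < \<mu>\<close> by simp
      then show "norm (xs i - xs j) < \<epsilon>" using \<open>0 < \<epsilon>\<close> by (simp add: power_less_imp_less_base)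
    qed
  qed
  then obtain x where "xs \<longlonglongrightarrow> x" using Cauchy_convergent_iff convergent_def by blast
  then have "(\<lambda>n. J (xs n)) \<longlonglongrightarrow> J x"
    using cont by (metis UNIV_I continuous_on_eq_continuous_at isCont_tendsto_compose open_UNIV)
  moreover have "(\<lambda>n. m + 1 / real (Suc n)) \<longlonglongrightarrow> m + 0"
    by (intro tendsto_intros LIMSEQ_Suc[OF lim_inverse_n'])
  ultimately have "J x \<le> m" using xs by (intro LIMSEQ_le) (auto intro: less_imp_le)
  then show ?thesis using m_le by (meson order_trans)
qed

lemma inverse_mult_le_if_le_mult:
  assumes "P \<le> ereal c * S" and "0 < c"
  shows "ereal (1 / c) * P \<le> S"
proof -
  have "ereal (1 / c) * P \<le> ereal (1 / c) * (ereal c * S)"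
    using assms by (intro ereal_mult_left_mono) auto
  also have "\<dots> = S"
    using \<open>0 < c\<close> by (simp add: mult.assoc[symmetric] one_ereal_def[symmetric])
  finally show ?thesis .
qed

lemma le_if_square_le_mult:
  fixes a b :: real
  assumes "0 \<le> b" and "a\<^sup>2 \<le> a * b"
  shows "a \<le> b"
  using assms by (cases "0 < a") (auto simp: power2_eq_square)

lemma norm_add_scaleR_square:
  fixes u v :: "'a::real_inner"
  shows "(norm (u + s *\<^sub>R v))\<^sup>2 = (norm u)\<^sup>2 + 2 * s * inner u v + s\<^sup>2 * (norm v)\<^sup>2"
  unfolding power2_norm_eq_inner
  by (simp add: inner_commute power2_eq_square algebra_simps)

lemma antimono_tendsto_SUP_at_right_0:
  fixes f :: "real \<Rightarrow> 'b::{complete_linorder,linorder_topology}"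
  assumes antimono: "\<And>a b. 0 < a \<Longrightarrow> a < b \<Longrightarrow> f b \<le> f a"
  shows "(f \<longlongrightarrow> (SUP a\<in>{0<..}. f a)) (at_right 0)"
proof (rule order_tendstoI)
  fix y assume "y < (SUP a\<in>{0<..}. f a)"
  then obtain a where "0 < a" "y < f a" by (auto simp: less_SUP_iff)
  have "y < f b" if "0 < b" "b < a" for b
    using \<open>y < f a\<close> antimono[OF that] by (rule less_le_trans)
  then show "\<forall>\<^sub>F b in at_right 0. y < f b"
    unfolding eventually_at_right_field using \<open>0 < a\<close> by blast
next
  fix y assume "(SUP a\<in>{0<..}. f a) < y"
  then have "f b < y" if "0 < b" for b
    using SUP_upper[of b "{0<..}" f] that by (simp add: le_less_trans)
  then show "\<forall>\<^sub>F b in at_right 0. f b < y"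
    unfolding eventually_at_right_field by (intro exI[of _ 1]) auto
qed

locale nonneg_selfadjoint =
  fixes A :: "'a::real_inner \<Rightarrow> 'a"
  assumes linear_A: "linear A"
    and selfadjoint: "\<And>x y. inner (A x) y = inner x (A y)"
    and nonneg: "\<And>x. 0 \<le> inner (A x) x"
    and surj_shift: "\<And>\<alpha>. 0 < \<alpha> \<Longrightarrow> surj (\<lambda>x. A x + \<alpha> *\<^sub>R x)"
begin

lemma norm_Pair_le_norm_shift:
  assumes "0 \<le> \<alpha>"
  shows "norm (\<alpha> *\<^sub>R v, A v) \<le> norm (A v + \<alpha> *\<^sub>R v)"
proof -
  have "(norm (\<alpha> *\<^sub>R v, A v))\<^sup>2 \<le> (norm (A v + \<alpha> *\<^sub>R v))\<^sup>2"
    using assms nonneg[of v] by (simp add: norm_Pair norm_add_scaleR_square power_mult_distrib)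
  then show ?thesis by (simp add: power2_le_iff_abs_le)
qed

text \<open>The bound behind \<open>K\<^sub>\<alpha>(e) \<ge> \<alpha> \<parallel>(A + \<alpha>)\<^sup>-\<^sup>1 e\<parallel>\<close>: writing \<open>d = (A + \<alpha>) v\<close>, the
  identity \<open>\<parallel>d\<parallel>\<^sup>2 = \<langle>\<alpha> v, e - A z\<rangle> + \<langle>A v, \<alpha> z\<rangle>\<close> is one inner product in the product space.\<close>
lemma norm_le_approximation_error:
  assumes "0 < \<alpha>" and d: "A d + \<alpha> *\<^sub>R d = \<alpha> *\<^sub>R e"
  shows "norm d \<le> sqrt ((norm (e - A z))\<^sup>2 + \<alpha>\<^sup>2 * (norm z)\<^sup>2)"
proof -
  obtain v where v: "d = A v + \<alpha> *\<^sub>R v" using surj_shift[OF \<open>0 < \<alpha>\<close>] by blast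
  have "(norm d)\<^sup>2 = inner (A v + \<alpha> *\<^sub>R v) d"
    using v by (simp add: power2_norm_eq_inner)
  also have "\<dots> = inner v (A d + \<alpha> *\<^sub>R d)"
    by (simp add: inner_add_left inner_add_right selfadjoint)
  also have "\<dots> = inner (\<alpha> *\<^sub>R v, A v) (e - A z, \<alpha> *\<^sub>R z)"
    by (simp add: d selfadjoint algebra_simps)
  also have "\<dots> \<le> norm (\<alpha> *\<^sub>R v, A v) * norm (e - A z, \<alpha> *\<^sub>R z)"
    by (rule norm_cauchy_schwarz)
  also have "\<dots> \<le> norm d * sqrt ((norm (e - A z))\<^sup>2 + \<alpha>\<^sup>2 * (norm z)\<^sup>2)"
    using norm_Pair_le_norm_shift[of \<alpha> v] \<open>0 < \<alpha>\<close>
    by (simp add: v norm_Pair power_mult_distrib mult_right_mono)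
  finally show ?thesis by (rule le_if_square_le_mult[rotated]) simp
qed

lemma norm_le_Kfun:
  assumes "0 < \<alpha>" and "A d + \<alpha> *\<^sub>R d = \<alpha> *\<^sub>R e"
  shows "norm d \<le> Kfun A \<alpha> e"
  unfolding Kfun_def
proof (rule cINF_greatest)
  fix x1 assume "x1 \<in> range A"
  then have "A (inv A x1) = x1" by (rule f_inv_into_f)
  then show "norm d \<le> sqrt ((norm (e - x1))\<^sup>2 + \<alpha>\<^sup>2 * (norm (inv A x1))\<^sup>2)"
    using norm_le_approximation_error[OF assms, of "inv A x1"] by simp
qed simp

lemma Kfun_le_norm_mult:
  assumes "inj A" and "0 < \<alpha>" and d: "A d + \<alpha> *\<^sub>R d = \<alpha> *\<^sub>R e"
  shows "Kfun A t e \<le> norm d * sqrt (1 + t\<^sup>2 / \<alpha>\<^sup>2)"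
proof -
  define r where "r = (1 / \<alpha>) *\<^sub>R d"
  have "A d = \<alpha> *\<^sub>R (e - d)" using d by (simp add: scaleR_diff_right eq_diff_eq)
  then have "e - A r = d" using \<open>0 < \<alpha>\<close> by (simp add: r_def linear_scale[OF linear_A])
  have "Kfun A t e \<le> sqrt ((norm (e - A r))\<^sup>2 + t\<^sup>2 * (norm (inv A (A r)))\<^sup>2)"
    unfolding Kfun_def by (rule cINF_lower) (auto intro: bdd_belowI[of _ 0])
  also have "\<dots> = sqrt ((norm d)\<^sup>2 * (1 + t\<^sup>2 / \<alpha>\<^sup>2))"
    using \<open>inj A\<close> \<open>e - A r = d\<close> \<open>0 < \<alpha>\<close> by (simp add: r_def field_simps)
  finally show ?thesis by (simp add: real_sqrt_mult)
qed

lemma norm_shift_solution_antimono: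
  assumes "0 \<le> \<alpha>" "\<alpha> < \<beta>" and r: "A r + \<alpha> *\<^sub>R r = e" and r': "A r' + \<beta> *\<^sub>R r' = e"
  shows "norm r' \<le> norm r"
proof -
  have "A (r - r') + \<alpha> *\<^sub>R (r - r') = (\<beta> - \<alpha>) *\<^sub>R r'"
    using r r' by (simp add: linear_diff[OF linear_A] algebra_simps)
  then have "0 \<le> (\<beta> - \<alpha>) * inner r' (r - r')"
    using nonneg[of "r - r'"] \<open>0 \<le> \<alpha>\<close>
    by (metis inner_add_left inner_scaleR_left inner_commute add_nonneg_nonneg mult_nonneg_nonneg inner_ge_zero)
  then have "(norm r')\<^sup>2 \<le> inner r' r"
    using \<open>\<alpha> < \<beta>\<close> by (simp add: zero_le_mult_iff inner_diff_right power2_norm_eq_inner)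
  also have "\<dots> \<le> norm r' * norm r" by (rule norm_cauchy_schwarz)
  finally show ?thesis by (rule le_if_square_le_mult[rotated]) simp
qed

lemma scaled_norm_tendsto_SUP:
  assumes d: "\<And>\<alpha>. 0 < \<alpha> \<Longrightarrow> A (d \<alpha>) + \<alpha> *\<^sub>R d \<alpha> = \<alpha> *\<^sub>R e"
  shows "((\<lambda>\<alpha>. ereal (\<alpha> powr -1 * norm (d \<alpha>)))
    \<longlongrightarrow> (SUP \<alpha>\<in>{0<..}. ereal (\<alpha> powr -1 * norm (d \<alpha>)))) (at_right 0)"
proof (rule antimono_tendsto_SUP_at_right_0)
  have solves: "A ((1 / \<alpha>) *\<^sub>R d \<alpha>) + \<alpha> *\<^sub>R ((1 / \<alpha>) *\<^sub>R d \<alpha>) = e" if "0 < \<alpha>" for \<alpha>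
    using arg_cong[OF d[OF that], of "scaleR (1 / \<alpha>)"] that
    by (simp add: linear_scale[OF linear_A] scaleR_add_right)
  fix \<alpha> \<beta> :: real assume "0 < \<alpha>" "\<alpha> < \<beta>"
  then show "ereal (\<beta> powr -1 * norm (d \<beta>)) \<le> ereal (\<alpha> powr -1 * norm (d \<alpha>))"
    using norm_shift_solution_antimono[OF _ _ solves solves] by (simp add: powr_neg_one)
qed

end

locale adjoint_pair =
  fixes T :: "'a::{real_inner,complete_space} \<Rightarrow> 'b::real_inner" and Tadj :: "'b \<Rightarrow> 'a"
  assumes bounded_linear_T: "bounded_linear T"
    and adjoint: "\<And>x y. inner (T x) y = inner x (Tadj y)"
begin

lemma linear_T: "linear T"
  using bounded_linear_T by (rule bounded_linear.linear)

lemma linear_Tadj: "linear Tadj"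
  by (rule linearI) (metis adjoint inner_add_right vector_eq_ldot, metis adjoint inner_scaleR_right vector_eq_ldot)

lemma inner_Tadj_T: "inner (Tadj (T x)) y = inner (T x) (T y)"
  by (metis adjoint inner_commute)

lemma surj_Tadj_T_shift:
  assumes "0 < \<alpha>"
  shows "surj (\<lambda>x. Tadj (T x) + \<alpha> *\<^sub>R x)"
  unfolding surj_def
proof
  fix y :: 'a
  \<comment> \<open>A minimizer of \<open>J\<close> solves the equation, because \<open>grad x\<close> is half the gradient of \<open>J\<close> at \<open>x\<close>.\<close>
  define c where "c = (1 / \<alpha>) *\<^sub>R y"
  define J where "J x = (norm (T x))\<^sup>2 + \<alpha> * (norm (x - c))\<^sup>2" for x
  define Q where "Q h = (norm (T h))\<^sup>2 + \<alpha> * (norm h)\<^sup>2" for h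
  define grad where "grad x = Tadj (T x) + \<alpha> *\<^sub>R (x - c)" for x
  have expand: "J (x + s *\<^sub>R h) = J x + 2 * s * inner (grad x) h + s\<^sup>2 * Q h" for x h s
  proof -
    have "T (x + s *\<^sub>R h) = T x + s *\<^sub>R T h" "x + s *\<^sub>R h - c = (x - c) + s *\<^sub>R h"
      by (simp_all add: linear_add[OF linear_T] linear_scale[OF linear_T])
    then show ?thesis
      unfolding J_def Q_def grad_def
      by (simp only: norm_add_scaleR_square) (simp add: inner_Tadj_T algebra_simps)
  qed
  have "\<exists>x. \<forall>z. J x \<le> J z"
  proof (rule uniformly_convex_has_minimizer[where \<mu> = "\<alpha> / 2"])
    show "continuous_on UNIV J"
      unfolding J_def by (intro continuous_intros bounded_linear.continuous_on[OF bounded_linear_T])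
    show "\<alpha> / 2 * (norm (x - z))\<^sup>2 \<le> J x + J z - 2 * J ((1/2) *\<^sub>R (x + z))" for x z
    proof -
      define m h where "m = (1/2) *\<^sub>R (x + z)" and "h = (1/2) *\<^sub>R (x - z)"
      have "x = m + 1 *\<^sub>R h" "z = m + (-1) *\<^sub>R h" "x - z = 2 *\<^sub>R h"
        by (simp_all add: m_def h_def algebra_simps flip: scaleR_add_left)
      then have "J x + J z - 2 * J m = 2 * Q h" "\<alpha> / 2 * (norm (x - z))\<^sup>2 = 2 * (\<alpha> * (norm h)\<^sup>2)"
        using expand[of m 1 h] expand[of m "-1" h] by (simp_all add: power_mult_distrib)
      moreover have "0 \<le> (norm (T h))\<^sup>2" by simp
      ultimately show ?thesis unfolding m_def[symmetric] using Q_def[of h] by linarith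
    qed
  qed (use \<open>0 < \<alpha>\<close> in \<open>simp_all add: J_def\<close>)
  then obtain x where min: "\<And>z. J x \<le> J z" by blast
  have "0 \<le> - 2 * (norm (grad x))\<^sup>2"
  proof (rule nonneg_if_quadratic_nonneg_at_right)
    fix s :: real assume "0 < s"
    show "0 \<le> s * (- 2 * (norm (grad x))\<^sup>2) + s\<^sup>2 * Q (- grad x)"
      using min[of "x + s *\<^sub>R (- grad x)"] expand[of x s "- grad x"]
      by (simp add: power2_norm_eq_inner)
  qed
  then have "grad x = 0" by simp
  then show "\<exists>x. y = Tadj (T x) + \<alpha> *\<^sub>R x"
    using \<open>0 < \<alpha>\<close> by (auto simp: grad_def c_def algebra_simps)
qed

sublocale nonneg_selfadjoint "Tadj \<circ> T"
proof (rule nonneg_selfadjoint.intro)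
  show "linear (Tadj \<circ> T)" by (rule linear_compose[OF linear_T linear_Tadj])
  show "inner ((Tadj \<circ> T) x) y = inner x ((Tadj \<circ> T) y)" for x y
    by (metis comp_apply inner_Tadj_T inner_commute)
  show "0 \<le> inner ((Tadj \<circ> T) x) x" for x by (simp add: inner_Tadj_T)
  show "surj (\<lambda>x. (Tadj \<circ> T) x + \<alpha> *\<^sub>R x)" if "0 < \<alpha>" for \<alpha>
    using surj_Tadj_T_shift[OF that] by simp
qed

lemma inj_Tadj_T:
  assumes "inj T"
  shows "inj (Tadj \<circ> T)"
proof (rule injI)
  fix x y assume "(Tadj \<circ> T) x = (Tadj \<circ> T) y"
  then have "inner (Tadj (T (x - y))) (x - y) = 0"
    by (simp add: linear_diff[OF linear_T] linear_diff[OF linear_Tadj])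
  then have "T (x - y) = 0" by (simp add: inner_Tadj_T)
  then show "x = y" using assms by (simp add: linear_diff[OF linear_T] inj_eq)
qed

lemma tikhonov_error_eq:
  fixes xd x0 :: 'a
  assumes "0 < \<alpha>"
  defines "xa \<equiv> inv (\<lambda>x. Tadj (T x) + \<alpha> *\<^sub>R x) (Tadj (T xd) + \<alpha> *\<^sub>R x0)"
  shows "(Tadj \<circ> T) (xd - xa) + \<alpha> *\<^sub>R (xd - xa) = \<alpha> *\<^sub>R (xd - x0)"
proof -
  have "Tadj (T xa) + \<alpha> *\<^sub>R xa = Tadj (T xd) + \<alpha> *\<^sub>R x0"
    unfolding xa_def using surj_f_inv_f[OF surj_Tadj_T_shift[OF assms(1)]] by simp
  then show ?thesis
    by (simp add: linear_diff[OF linear_T] linear_diff[OF linear_Tadj] algebra_simps)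
qed

end

lemma Nconst_pos: "0 \<le> \<nu> \<Longrightarrow> \<nu> \<le> 1 \<Longrightarrow> 0 < Nconst \<nu>"
  by (cases "\<nu> = 0 \<or> \<nu> = 1") (auto simp: Nconst_def)

lemma Nconst_attained:
  assumes "0 < \<nu>" "\<nu> < 1"
  defines "s \<equiv> sqrt ((1 - \<nu>) / \<nu>)"
  shows "s powr \<nu> * sqrt (1 + 1 / s\<^sup>2) = Nconst \<nu>"
proof -
  have s2: "s\<^sup>2 = (1 - \<nu>) / \<nu>" using assms by (simp add: s_def)
  have "s powr \<nu> = sqrt (((1 - \<nu>) / \<nu>) powr \<nu>)"
    using assms by (simp add: s_def powr_half_sqrt[symmetric] powr_powr mult.commute)
  also have "\<dots> = sqrt ((1 - \<nu>) powr \<nu> / \<nu> powr \<nu>)"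
    using assms by (simp add: powr_divide)
  finally have "s powr \<nu> * sqrt (1 + 1 / s\<^sup>2) = sqrt ((1 - \<nu>) powr \<nu> / \<nu> powr \<nu> / (1 - \<nu>))"
    using assms by (simp add: s2 real_sqrt_mult[symmetric] field_simps)
  also have "\<dots> = Nconst \<nu>"
    using assms by (simp add: Nconst_def powr_diff real_sqrt_divide field_simps)
  finally show ?thesis .
qed

lemma sqrt_one_plus_inverse_square_le: "0 < s \<Longrightarrow> sqrt (1 + 1 / s\<^sup>2) \<le> 1 + 1 / s"
  by (rule real_le_lsqrt) (auto simp: power2_eq_square field_simps)

text \<open>\<open>N\<^sub>\<nu>\<close> is the infimum of \<open>s\<^sup>\<nu> (1 + s\<^sup>-\<^sup>2)\<^sup>1\<^sup>/\<^sup>2\<close> over \<open>s > 0\<close>: attained at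
  \<open>s = ((1 - \<nu>)/\<nu>)\<^sup>1\<^sup>/\<^sup>2\<close> for \<open>0 < \<nu> < 1\<close>, approached as \<open>s \<rightarrow> \<infinity>\<close> resp. \<open>s \<rightarrow> 0\<close> for \<open>\<nu> = 0, 1\<close>.\<close>
lemma le_Nconst_mult_if_le_interpolation_weight:
  fixes x c :: real
  assumes "0 \<le> \<nu>" "\<nu> \<le> 1" "0 \<le> c"
    and le: "\<And>s. 0 < s \<Longrightarrow> x \<le> c * (s powr \<nu> * sqrt (1 + 1 / s\<^sup>2))"
  shows "x \<le> c * Nconst \<nu>"
proof (cases "\<nu> = 0 \<or> \<nu> = 1")
  case True
  show ?thesis
  proof (rule field_le_epsilon)
    fix \<epsilon> :: real assume "0 < \<epsilon>"
    define s where "s = (if \<nu> = 0 then (c + 1) / \<epsilon> else \<epsilon> / (c + 1))"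
    have "0 < s" using \<open>0 < \<epsilon>\<close> \<open>0 \<le> c\<close> by (simp add: s_def)
    have "s powr \<nu> * sqrt (1 + 1 / s\<^sup>2) \<le> s powr \<nu> * (1 + 1 / s)"
      using sqrt_one_plus_inverse_square_le[OF \<open>0 < s\<close>] by (simp add: mult_left_mono)
    also have "\<dots> = 1 + \<epsilon> / (c + 1)"
    proof (cases "\<nu> = 0")
      case False
      with True have "\<nu> = 1" by simp
      then show ?thesis using \<open>0 < s\<close> by (simp add: distrib_left) (simp add: s_def)
    qed (use \<open>0 < \<epsilon>\<close> \<open>0 \<le> c\<close> in \<open>simp add: s_def\<close>)
    finally have "x \<le> c * (1 + \<epsilon> / (c + 1))"
      using le[OF \<open>0 < s\<close>] \<open>0 \<le> c\<close> by (meson mult_left_mono order_trans)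
    also have "\<dots> \<le> c + \<epsilon>"
      using \<open>0 < \<epsilon>\<close> \<open>0 \<le> c\<close> by (simp add: field_simps)
    finally show "x \<le> c * Nconst \<nu> + \<epsilon>" using True by (auto simp: Nconst_def)
  qed
next
  case False
  then have "0 < \<nu>" "\<nu> < 1" using assms(1,2) by auto
  then show ?thesis
    using le[of "sqrt ((1 - \<nu>) / \<nu>)"] Nconst_attained[of \<nu>] by simp
qed

lemma SUP_le_Nconst_mult_SUP:
  fixes D K :: "real \<Rightarrow> real"
  assumes "0 \<le> \<nu>" "\<nu> \<le> 1" and D_nonneg: "\<And>\<alpha>. 0 \<le> D \<alpha>"
    and K_le: "\<And>t \<alpha>. 0 < t \<Longrightarrow> 0 < \<alpha> \<Longrightarrow> K t \<le> D \<alpha> * sqrt (1 + t\<^sup>2 / \<alpha>\<^sup>2)"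
  shows "(SUP t\<in>{0<..}. ereal (t powr -\<nu> * K t))
    \<le> ereal (Nconst \<nu>) * (SUP \<alpha>\<in>{0<..}. ereal (\<alpha> powr -\<nu> * D \<alpha>))"
    (is "_ \<le> _ * ?S")
proof (cases ?S)
  case (real c)
  have bound: "\<alpha> powr -\<nu> * D \<alpha> \<le> c" if "0 < \<alpha>" for \<alpha>
    using SUP_upper[of \<alpha> "{0<..}" "\<lambda>\<alpha>. ereal (\<alpha> powr -\<nu> * D \<alpha>)"] that real by simp
  have "0 \<le> c" using bound[of 1] D_nonneg[of 1] by simp
  have "t powr -\<nu> * K t \<le> c * Nconst \<nu>" if "0 < t" for t
  proof (rule le_Nconst_mult_if_le_interpolation_weight[OF assms(1,2) \<open>0 \<le> c\<close>])
    fix s :: real assume "0 < s"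
    have "t powr -\<nu> * K t \<le> t powr -\<nu> * (D (s * t) * sqrt (1 + 1 / s\<^sup>2))"
      using K_le[of t "s * t"] \<open>0 < s\<close> \<open>0 < t\<close> by (simp add: mult_left_mono power_mult_distrib)
    also have "\<dots> = ((s * t) powr -\<nu> * D (s * t)) * (s powr \<nu> * sqrt (1 + 1 / s\<^sup>2))"
      using \<open>0 < s\<close> \<open>0 < t\<close> by (simp add: powr_mult powr_minus field_simps)
    also have "\<dots> \<le> c * (s powr \<nu> * sqrt (1 + 1 / s\<^sup>2))"
      using bound[of "s * t"] \<open>0 < s\<close> \<open>0 < t\<close> by (simp add: mult_right_mono)
    finally show "t powr -\<nu> * K t \<le> c * (s powr \<nu> * sqrt (1 + 1 / s\<^sup>2))" .
  qed
  then show ?thesis using real by (auto intro: SUP_least simp: mult.commute)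
next
  case PInf
  then show ?thesis using Nconst_pos[OF assms(1,2)] by simp
next
  case MInf
  then show ?thesis using SUP_upper[of 1 "{0<..}" "\<lambda>\<alpha>. ereal (\<alpha> powr -\<nu> * D \<alpha>)"] D_nonneg[of 1] by simp
qed

theorem proposition3:
  fixes T :: "'a::{real_inner,complete_space} \<Rightarrow> 'b::{real_inner,complete_space}"
    and Tadj :: "'b \<Rightarrow> 'a"
    and xd x0 :: 'a and \<nu> :: real
  assumes "bounded_linear T" and "inj T"
    and "\<forall>x y. inner (T x) y = inner x (Tadj y)"
    and "0 \<le> \<nu>" and "\<nu> \<le> 1"
  defines "xa \<equiv> \<lambda>\<alpha>::real. inv (\<lambda>x. Tadj (T x) + \<alpha> *\<^sub>R x) (Tadj (T xd) + \<alpha> *\<^sub>R x0)"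
  defines "S \<equiv> (SUP \<alpha>\<in>{0<..}. ereal (\<alpha> powr (-\<nu>) * norm (xd - xa \<alpha>)))"
  defines "P \<equiv> interp_norm (Tadj \<circ> T) \<nu> (xd - x0)"
  shows "ereal (1 / Nconst \<nu>) * P \<le> S \<and> S \<le> P
    \<and> ((\<nu> = 0 \<or> \<nu> = 1) \<longrightarrow> S = P)
    \<and> (\<nu> = 1 \<longrightarrow>
          ((\<lambda>\<alpha>. ereal (\<alpha> powr (-\<nu>) * norm (xd - xa \<alpha>))) \<longlongrightarrow> P) (at_right 0))"
proof -
  interpret adjoint_pair T Tadj using assms(1,3) by (simp add: adjoint_pair_def)
  define d where "d \<alpha> = xd - xa \<alpha>" for \<alpha>
  have d_eq: "(Tadj \<circ> T) (d \<alpha>) + \<alpha> *\<^sub>R d \<alpha> = \<alpha> *\<^sub>R (xd - x0)" if "0 < \<alpha>" for \<alpha>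
    unfolding d_def xa_def using that by (rule tikhonov_error_eq)
  have S_le_P: "S \<le> P"
    unfolding S_def P_def interp_norm_def d_def[symmetric]
    using norm_le_Kfun[OF _ d_eq] by (intro SUP_subset_mono) (auto intro!: mult_left_mono)
  have P_le: "P \<le> ereal (Nconst \<nu>) * S"
    unfolding S_def P_def interp_norm_def d_def[symmetric]
    using Kfun_le_norm_mult[OF inj_Tadj_T[OF \<open>inj T\<close>] _ d_eq]
    by (intro SUP_le_Nconst_mult_SUP assms(4,5)) auto
  have lower: "ereal (1 / Nconst \<nu>) * P \<le> S"
    using P_le Nconst_pos[OF assms(4,5)] by (rule inverse_mult_le_if_le_mult)
  have S_eq_P: "S = P" if "\<nu> = 0 \<or> \<nu> = 1"
    using S_le_P P_le that by (auto simp: Nconst_def one_ereal_def[symmetric])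
  have "((\<lambda>\<alpha>. ereal (\<alpha> powr (-\<nu>) * norm (xd - xa \<alpha>))) \<longlongrightarrow> P) (at_right 0)"
    if "\<nu> = 1"
    using scaled_norm_tendsto_SUP[OF d_eq] S_eq_P that by (simp add: S_def d_def)
  then show ?thesis using lower S_le_P S_eq_P by blast
qed

end
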